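(* Let $d \equiv 2 \pmod 4$ be a square-free positive integer such that both equations $x^2 - dy^2 = -1$ and $x^2 - dy^2 = 6$ have solutions in integers $x, y$. Let $n = 4m + 4k\sqrt{d}$ with $m, k \in \mathbb{Z}$, and suppose it is not the case that both $m \equiv 5 \pmod 6$ and $k \equiv 3 \pmod 6$. Then there exist infinitely many $D(n)$-quadruples in $\mathbb{Z}[\sqrt{d}]$.
   Context: For $n \in \mathbb{Z}[\sqrt{d}]$, a set $\{a_1,a_2,a_3,a_4\}$ of four distinct non-zero elements of $\mathbb{Z}[\sqrt{d}]$ is called a $D(n)$-quadruple in $\mathbb{Z}[\sqrt{d}]$ if $a_ia_j + n$ is a square of an element of $\mathbb{Z}[\sqrt{d}]$ for all $1 \le i < j \le 4$. *)

theory Defs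
  imports Main "HOL-Computational_Algebra.Squarefree"
begin

text \<open>Elements of Z[sqrt d] are represented as pairs (a, b) meaning a + b*sqrt d.
  For non-square d this representation is unique.\<close>

type_synonym zsqrt = "int \<times> int"

definition zs_add :: "zsqrt \<Rightarrow> zsqrt \<Rightarrow> zsqrt" where
  "zs_add x y = (fst x + fst y, snd x + snd y)"

definition zs_mult :: "int \<Rightarrow> zsqrt \<Rightarrow> zsqrt \<Rightarrow> zsqrt" where
  "zs_mult d x y = (fst x * fst y + d * snd x * snd y, fst x * snd y + snd x * fst y)"

definition zs_is_square :: "int \<Rightarrow> zsqrt \<Rightarrow> bool" where
  "zs_is_square d w \<longleftrightarrow> (\<exists>z. zs_mult d z z = w)"

definition D_quadruple :: "int \<Rightarrow> zsqrt \<Rightarrow> zsqrt set \<Rightarrow> bool" where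
  "D_quadruple d n S \<longleftrightarrow>
     card S = 4 \<and> (0, 0) \<notin> S \<and>
     (\<forall>a\<in>S. \<forall>b\<in>S. a \<noteq> b \<longrightarrow> zs_is_square d (zs_add (zs_mult d a b) n))"

end

theory Submission
  imports Defs "HOL-Computational_Algebra.Polynomial"
begin

text \<open>
  Map \<open>\<int>[\<surd>d]\<close> into \<open>\<real>\<close> by \<open>(a, b) \<mapsto> a + b\<surd>d\<close>; this is injective because
  \<open>d \<equiv> 2 (mod 4)\<close> is not a square, so all computations can be done with real numbers.
  If \<open>R\<^sup>2 = tA + n\<close>, then for the set \<open>{t, A, A + 2R + t, 4A + 4R + t}\<close> every product of two
  elements plus \<open>n\<close> is a square, except possibly \<open>t(4A + 4R + t) + n = (2R + t)\<^sup>2 - 3n\<close>.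
  To make this one a square as well, factor \<open>3n/4 = \<alpha>\<beta>\<close> and take \<open>2R + t = \<alpha>e + \<beta>/e\<close> for a
  unit \<open>e\<close>: then \<open>(2R + t)\<^sup>2 - 3n = (\<alpha>e - \<beta>/e)\<^sup>2\<close>. If \<open>e\<close> and \<open>1/e\<close> are \<open>\<equiv> 1 (mod 12)\<close>, the
  integrality of \<open>R\<close> and of \<open>A = (R\<^sup>2 - n)/t\<close> reduces to the case \<open>e = 1\<close>, and the powers of
  the fourth power of a unit of norm \<open>-1\<close> supply infinitely many such \<open>e\<close>.
  The factorisation and \<open>t\<close> are chosen according to \<open>m, k\<close> modulo 4 and modulo 3; for odd
  \<open>m, k\<close> one takes \<open>t\<close> of norm \<open>\<plusminus>6\<close>, and this works unless \<open>m \<equiv> 5\<close>, \<open>k \<equiv> 3 (mod 6)\<close>.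
\<close>

section \<open>The embedding of \<open>\<int>[\<surd>d]\<close> into the reals\<close>

definition zs_real :: "int \<Rightarrow> zsqrt \<Rightarrow> real" where
  "zs_real d x = of_int (fst x) + of_int (snd x) * sqrt (of_int d)"

definition Zsqrt :: "int \<Rightarrow> real set" where
  "Zsqrt d = range (zs_real d)"

lemma zs_real_add: "zs_real d (zs_add x y) = zs_real d x + zs_real d y"
  by (simp add: zs_real_def zs_add_def algebra_simps)

lemma zs_real_mult:
  assumes "d \<ge> 0"
  shows "zs_real d (zs_mult d x y) = zs_real d x * zs_real d y"
proof -
  have "sqrt (of_int d) * sqrt (of_int d) = (of_int d :: real)"
    using assms by simp
  then show ?thesis
    by (simp add: zs_real_def zs_mult_def algebra_simps)
qed

lemma zs_real_mult_conj:
  assumes "d \<ge> 0"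
  shows "zs_real d (x, y) * zs_real d (x, - y) = of_int (x^2 - d * y^2)"
  using assms by (simp add: zs_real_def algebra_simps power2_eq_square)

lemma zs_real_square:
  assumes "d \<ge> 0"
  shows "zs_real d (a, b) ^ 2 = zs_real d (a^2 + d * b^2, 2 * a * b)"
  using assms by (simp add: zs_real_def power2_eq_square algebra_simps)

lemma square_eq_mult_square_imp_zero:
  fixes a b d :: int
  assumes "d mod 4 = 2" and "a^2 = d * b^2"
  shows "b = 0"
proof (rule ccontr)
  assume "b \<noteq> 0"
  have "d \<noteq> 0" using assms(1) by auto
  with \<open>b \<noteq> 0\<close> have "a \<noteq> 0" using assms(2) by auto
  have two: "prime (2::int)" by simp
  have "multiplicity 2 d = 1"
  proof (rule multiplicity_eqI)
    show "2 ^ 1 dvd d" "\<not> 2 ^ Suc 1 dvd d"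
      using assms(1) by (simp_all add: dvd_eq_mod_eq_0; presburger)+
  qed
  then have "multiplicity 2 (d * b^2) = 1 + 2 * multiplicity 2 b"
    using \<open>d \<noteq> 0\<close> \<open>b \<noteq> 0\<close> two
    by (simp add: prime_elem_multiplicity_mult_distrib prime_elem_multiplicity_power_distrib)
  moreover have "multiplicity 2 (a^2) = 2 * multiplicity 2 a"
    using \<open>a \<noteq> 0\<close> two by (simp add: prime_elem_multiplicity_power_distrib)
  ultimately have "2 * multiplicity 2 a = 1 + 2 * multiplicity (2::int) b"
    using assms(2) by simp
  then show False by presburger
qed

lemma inj_zs_real:
  assumes "d mod 4 = 2" and "d > 0"
  shows "inj (zs_real d)"
proof (rule injI)
  fix x y assume eq: "zs_real d x = zs_real d y"
  then have "of_int (fst y - fst x) = of_int (snd x - snd y) * sqrt (of_int d :: real)"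
    by (simp add: zs_real_def algebra_simps)
  then have "(of_int (fst y - fst x))^2 = (of_int (snd x - snd y))^2 * (of_int d :: real)"
    using assms(2) by (simp add: power_mult_distrib)
  then have "of_int ((fst y - fst x)^2) = (of_int (d * (snd x - snd y)^2) :: real)"
    by simp
  then have "(fst y - fst x)^2 = d * (snd x - snd y)^2"
    by (simp only: of_int_eq_iff)
  then have "snd x = snd y"
    using square_eq_mult_square_imp_zero[OF assms(1)] by fastforce
  with eq show "x = y"
    by (simp add: zs_real_def prod_eq_iff)
qed

lemma zs_real_in_Zsqrt [simp]: "zs_real d x \<in> Zsqrt d"
  by (simp add: Zsqrt_def)

lemma of_int_in_Zsqrt [simp]: "of_int a \<in> Zsqrt d"
proof -
  have "of_int a = zs_real d (a, 0)" by (simp add: zs_real_def)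
  then show ?thesis by simp
qed

lemma zero_in_Zsqrt [simp]: "0 \<in> Zsqrt d"
  and one_in_Zsqrt [simp]: "1 \<in> Zsqrt d"
  and numeral_in_Zsqrt [simp]: "numeral w \<in> Zsqrt d"
  using of_int_in_Zsqrt[of 0 d] of_int_in_Zsqrt[of 1 d] of_int_in_Zsqrt[of "numeral w" d]
  by simp_all

lemma sqrt_in_Zsqrt [simp]: "sqrt (of_int d) \<in> Zsqrt d"
proof -
  have "sqrt (of_int d) = zs_real d (0, 1)" by (simp add: zs_real_def)
  then show ?thesis by simp
qed

lemma Zsqrt_add [simp]: "a \<in> Zsqrt d \<Longrightarrow> b \<in> Zsqrt d \<Longrightarrow> a + b \<in> Zsqrt d"
  unfolding Zsqrt_def by (auto simp flip: zs_real_add)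

lemma Zsqrt_minus [simp]: "a \<in> Zsqrt d \<Longrightarrow> - a \<in> Zsqrt d"
proof -
  assume "a \<in> Zsqrt d"
  then obtain x where "a = zs_real d x" by (auto simp: Zsqrt_def)
  then have "- a = zs_real d (- fst x, - snd x)" by (simp add: zs_real_def)
  then show ?thesis by simp
qed

lemma Zsqrt_diff [simp]: "a \<in> Zsqrt d \<Longrightarrow> b \<in> Zsqrt d \<Longrightarrow> a - b \<in> Zsqrt d"
  using Zsqrt_add[of a d "- b"] by simp

lemma Zsqrt_mult [simp]: "d \<ge> 0 \<Longrightarrow> a \<in> Zsqrt d \<Longrightarrow> b \<in> Zsqrt d \<Longrightarrow> a * b \<in> Zsqrt d"
  unfolding Zsqrt_def by (auto simp flip: zs_real_mult)

lemma Zsqrt_power [simp]: "d \<ge> 0 \<Longrightarrow> a \<in> Zsqrt d \<Longrightarrow> a ^ j \<in> Zsqrt d"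
  by (induction j) simp_all

lemma zs_real_divide_in_Zsqrt:
  assumes "c dvd a" and "c dvd b"
  shows "zs_real d (a, b) / of_int c \<in> Zsqrt d"
proof (cases "c = 0")
  case False
  from assms obtain a' b' where "a = c * a'" "b = c * b'" unfolding dvd_def by blast
  with False have "zs_real d (a, b) / of_int c = zs_real d (a', b')"
    by (simp add: zs_real_def field_simps)
  then show ?thesis by simp
qed simp

lemma half_square_diff_in_Zsqrt:
  assumes "d \<ge> 0" and "even d" and "even a"
  shows "(zs_real d (a, b)^2 - 4 * zs_real d (m, k)) / 2 \<in> Zsqrt d"
proof -
  have "(zs_real d (a, b)^2 - 4 * zs_real d (m, k)) / 2
      = zs_real d (a^2 + d * b^2 - 4 * m, 2 * a * b - 4 * k) / of_int 2"
    using assms(1) by (simp add: zs_real_square) (simp add: zs_real_def algebra_simps)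
  also have "\<dots> \<in> Zsqrt d"
    using assms(2,3) by (intro zs_real_divide_in_Zsqrt) simp_all
  finally show ?thesis .
qed

section \<open>Infinitely many quadruples from one parameter\<close>

lemma D_quadruple_vimage:
  assumes inj: "inj (zs_real d)" and "d \<ge> 0"
    and T: "T \<subseteq> Zsqrt d" "card T = 4" "0 \<notin> T"
    and squares: "\<And>a b. a \<in> T \<Longrightarrow> b \<in> T \<Longrightarrow> a \<noteq> b \<Longrightarrow>
      \<exists>z \<in> Zsqrt d. z^2 = a * b + zs_real d n"
  shows "D_quadruple d n (zs_real d -` T)"
  unfolding D_quadruple_def
proof (intro conjI ballI impI)
  show "card (zs_real d -` T) = 4"
    using T by (simp add: card_vimage_inj[OF inj] Zsqrt_def)
  show "(0, 0) \<notin> zs_real d -` T"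
    using T by (simp add: zs_real_def)
next
  fix a b assume "a \<in> zs_real d -` T" "b \<in> zs_real d -` T" "a \<noteq> b"
  then obtain z where "z \<in> Zsqrt d" "z^2 = zs_real d a * zs_real d b + zs_real d n"
    using squares inj by (metis injD vimageE)
  moreover from \<open>z \<in> Zsqrt d\<close> obtain w where "z = zs_real d w"
    by (auto simp: Zsqrt_def)
  ultimately have "zs_real d (zs_mult d w w) = zs_real d (zs_add (zs_mult d a b) n)"
    using \<open>d \<ge> 0\<close> by (simp add: zs_real_mult zs_real_add power2_eq_square)
  then show "zs_is_square d (zs_add (zs_mult d a b) n)"
    unfolding zs_is_square_def using inj by (blast dest: injD)
qed

definition quadruple_of :: "'a::comm_ring_1 \<Rightarrow> 'a \<Rightarrow> 'a \<Rightarrow> 'a set" where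
  "quadruple_of t A R = {t, A, A + 2 * R + t, 4 * A + 4 * R + t}"

lemma quadruple_of_products:
  fixes t A R n :: "'a::comm_ring_1"
  assumes "R^2 = t * A + n"
  shows "t * (A + 2 * R + t) + n = (R + t)^2"
    and "A * (A + 2 * R + t) + n = (A + R)^2"
    and "A * (4 * A + 4 * R + t) + n = (2 * A + R)^2"
    and "(A + 2 * R + t) * (4 * A + 4 * R + t) + n = (2 * A + 3 * R + t)^2"
    and "t * (4 * A + 4 * R + t) + n = (2 * R + t)^2 - 3 * n"
proof -
  have n: "n = R^2 - t * A" using assms by simp
  show "t * (A + 2 * R + t) + n = (R + t)^2"
    and "A * (A + 2 * R + t) + n = (A + R)^2"
    and "A * (4 * A + 4 * R + t) + n = (2 * A + R)^2"
    and "(A + 2 * R + t) * (4 * A + 4 * R + t) + n = (2 * A + 3 * R + t)^2"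
    and "t * (4 * A + 4 * R + t) + n = (2 * R + t)^2 - 3 * n"
    unfolding n by (simp_all add: power2_eq_square algebra_simps)
qed

lemma D_quadruple_quadruple_of:
  assumes inj: "inj (zs_real d)" and "d \<ge> 0"
    and in_Zsqrt: "t \<in> Zsqrt d" "A \<in> Zsqrt d" "R \<in> Zsqrt d" "Z \<in> Zsqrt d"
    and R: "R^2 = t * A + zs_real d n" and Z: "(2 * R + t)^2 - Z^2 = 3 * zs_real d n"
    and "card (quadruple_of t A R) = 4" and "0 \<notin> quadruple_of t A R"
  shows "D_quadruple d n (zs_real d -` quadruple_of t A R)"
proof -
  let ?sq = "\<lambda>a b. \<exists>z \<in> Zsqrt d. z^2 = a * b + zs_real d n"
  note products = quadruple_of_products[OF R]
  have sqI: "?sq a b" if "z \<in> Zsqrt d" "a * b + zs_real d n = z^2" for a b z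
    using that by auto
  have roots: "R + t \<in> Zsqrt d" "A + R \<in> Zsqrt d" "2 * A + R \<in> Zsqrt d" "2 * A + 3 * R + t \<in> Zsqrt d"
    using in_Zsqrt \<open>d \<ge> 0\<close> by simp_all
  have "?sq t A" by (rule sqI[OF in_Zsqrt(3) R[symmetric]])
  moreover have "?sq t (A + 2 * R + t)" by (rule sqI[OF roots(1) products(1)])
  moreover have "?sq A (A + 2 * R + t)" by (rule sqI[OF roots(2) products(2)])
  moreover have "?sq A (4 * A + 4 * R + t)" by (rule sqI[OF roots(3) products(3)])
  moreover have "?sq (A + 2 * R + t) (4 * A + 4 * R + t)" by (rule sqI[OF roots(4) products(4)])
  moreover have "t * (4 * A + 4 * R + t) + zs_real d n = Z^2"
    using products(5) Z by (metis add_diff_cancel_left' diff_diff_eq2)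
  then have "?sq t (4 * A + 4 * R + t)" by (rule sqI[OF in_Zsqrt(4)])
  ultimately have "?sq a b \<and> ?sq b a"
    if "(a, b) \<in> {(t, A), (t, A + 2 * R + t), (A, A + 2 * R + t), (A, 4 * A + 4 * R + t),
      (A + 2 * R + t, 4 * A + 4 * R + t), (t, 4 * A + 4 * R + t)}" for a b
    using that by (auto simp: mult.commute)
  then have pairs: "?sq a b" if "a \<in> quadruple_of t A R" "b \<in> quadruple_of t A R" "a \<noteq> b" for a b
    using that unfolding quadruple_of_def by fastforce
  have "quadruple_of t A R \<subseteq> Zsqrt d"
    using in_Zsqrt \<open>d \<ge> 0\<close> by (simp add: quadruple_of_def)
  from D_quadruple_vimage[OF inj \<open>d \<ge> 0\<close> this assms(9,10) pairs] show ?thesis .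
qed

lemma finite_quadratic_roots:
  fixes a b c :: real
  assumes "a \<noteq> 0 \<or> b \<noteq> 0"
  shows "finite {v. a * v^2 + b * v + c = 0}"
proof -
  have "[:c, b, a:] \<noteq> 0" using assms by auto
  then have "finite {v. poly [:c, b, a:] v = 0}" by (rule poly_roots_finite)
  moreover have "{v. poly [:c, b, a:] v = 0} = {v. a * v^2 + b * v + c = 0}"
    by (auto simp: algebra_simps power2_eq_square)
  ultimately show ?thesis by simp
qed

lemma finite_degenerate_quadruple_of:
  fixes t N :: real
  assumes "t \<noteq> 0"
  shows "finite {R. let T = quadruple_of t ((R^2 - N) / t) R in card T \<noteq> 4 \<or> 0 \<in> T}"
proof -
  let ?A = "\<lambda>R. (R^2 - N) / t"
  let ?U = "{v. 1 * v^2 + 0 * v + (- N) = 0} \<union> {v. 1 * v^2 + (2 * t) * v + (t^2 - N) = 0}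
    \<union> {v. 4 * v^2 + (4 * t) * v + (t^2 - 4 * N) = 0} \<union> {v. 1 * v^2 + 0 * v + (- N - t^2) = 0}
    \<union> {v. 1 * v^2 + (2 * t) * v + (- N) = 0} \<union> {v. 1 * v^2 + t * v + (- N) = 0}
    \<union> {v. 0 * v^2 + (2 * t) * v + t^2 = 0} \<union> {v. 3 * v^2 + (4 * t) * v + (t^2 - 3 * N) = 0}
    \<union> {v. 3 * v^2 + (2 * t) * v + (- 3 * N) = 0}"
  have "card (quadruple_of t (?A R) R) = 4 \<and> 0 \<notin> quadruple_of t (?A R) R" if "R \<notin> ?U" for R
  proof
    have "distinct [t, ?A R, ?A R + 2 * R + t, 4 * ?A R + 4 * R + t]"
      using that assms by (simp add: field_simps power2_eq_square) (auto simp: algebra_simps)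
    from distinct_card[OF this] show "card (quadruple_of t (?A R) R) = 4"
      by (simp add: quadruple_of_def)
    show "0 \<notin> quadruple_of t (?A R) R"
      using that assms by (simp add: quadruple_of_def field_simps power2_eq_square)
        (auto simp: algebra_simps)
  qed
  then have "{R. let T = quadruple_of t (?A R) R in card T \<noteq> 4 \<or> 0 \<in> T} \<subseteq> ?U"
    by (auto simp: Let_def)
  moreover have "finite ?U"
    using assms by (intro finite_UnI finite_quadratic_roots) simp_all
  ultimately show ?thesis by (rule finite_subset)
qed

lemma finite_quadruple_of_fibre:
  fixes t N :: real
  assumes "t \<noteq> 0"
  shows "finite {R. quadruple_of t ((R^2 - N) / t) R = T}"
proof (cases "finite T")
  case True
  have "{R. quadruple_of t ((R^2 - N) / t) R = T} \<subseteq> (\<Union>x \<in> T. {v. 1 * v^2 + 0 * v + (- (N + t * x)) = 0})"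
  proof
    fix R assume "R \<in> {R. quadruple_of t ((R^2 - N) / t) R = T}"
    then have "(R^2 - N) / t \<in> T" by (auto simp: quadruple_of_def)
    moreover have "1 * R^2 + 0 * R + (- (N + t * ((R^2 - N) / t))) = 0" using assms by simp
    ultimately show "R \<in> (\<Union>x \<in> T. {v. 1 * v^2 + 0 * v + (- (N + t * x)) = 0})" by blast
  qed
  moreover have "finite \<dots>"
    using True by (intro finite_UN_I finite_quadratic_roots) simp_all
  ultimately show ?thesis by (rule finite_subset)
next
  case False
  moreover have "finite (quadruple_of t A R)" for A R by (simp add: quadruple_of_def)
  ultimately have "{R. quadruple_of t ((R^2 - N) / t) R = T} = {}" by auto
  then show ?thesis by (metis finite.emptyI)
qed

lemma infinite_image_finite_fibres:
  assumes "infinite A" and "\<And>y. finite {x \<in> A. f x = y}"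
  shows "infinite (f ` A)"
proof
  assume "finite (f ` A)"
  then have "finite (\<Union>y \<in> f ` A. {x \<in> A. f x = y})" using assms(2) by blast
  moreover have "A \<subseteq> (\<Union>y \<in> f ` A. {x \<in> A. f x = y})" by blast
  ultimately show False using assms(1) finite_subset by blast
qed

lemma infinite_D_quadruples:
  fixes t :: real and W :: "real set"
  assumes inj: "inj (zs_real d)" and "d \<ge> 0"
    and t: "t \<in> Zsqrt d" "t \<noteq> 0" and "infinite W"
    and admissible: "\<And>R. R \<in> W \<Longrightarrow> R \<in> Zsqrt d \<and> (R^2 - zs_real d n) / t \<in> Zsqrt d
      \<and> (\<exists>Z \<in> Zsqrt d. (2 * R + t)^2 - Z^2 = 3 * zs_real d n)"
  shows "infinite {S. D_quadruple d n S}"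
proof -
  let ?N = "zs_real d n"
  define Q where "Q R = quadruple_of t ((R^2 - ?N) / t) R" for R
  define W' where "W' = {R \<in> W. card (Q R) = 4 \<and> 0 \<notin> Q R}"
  have "W \<subseteq> W' \<union> {R. let T = Q R in card T \<noteq> 4 \<or> 0 \<in> T}"
    unfolding W'_def by (auto simp: Let_def)
  then have "infinite W'"
    using \<open>infinite W\<close> finite_degenerate_quadruple_of[OF t(2), of ?N]
    by (auto simp: Q_def dest: finite_subset)
  have quadruple: "D_quadruple d n (zs_real d -` Q R)" and in_Zsqrt: "Q R \<subseteq> Zsqrt d"
    if "R \<in> W'" for R
  proof -
    define A where "A = (R^2 - ?N) / t"
    from that admissible[of R] obtain Z where
      R: "R \<in> Zsqrt d" "A \<in> Zsqrt d" and Z: "Z \<in> Zsqrt d" "(2 * R + t)^2 - Z^2 = 3 * ?N"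
      and nondegenerate: "card (quadruple_of t A R) = 4" "0 \<notin> quadruple_of t A R"
      unfolding W'_def Q_def A_def by blast
    have "R^2 = t * A + ?N" using t(2) by (simp add: A_def)
    from D_quadruple_quadruple_of[OF inj \<open>d \<ge> 0\<close> t(1) R(2,1) Z(1) this Z(2) nondegenerate]
    show "D_quadruple d n (zs_real d -` Q R)" by (simp add: Q_def A_def)
    show "Q R \<subseteq> Zsqrt d"
      using R t(1) \<open>d \<ge> 0\<close> unfolding Q_def A_def[symmetric] by (simp add: quadruple_of_def)
  qed
  have "finite {R \<in> W'. Q R = T}" for T
    using finite_quadruple_of_fibre[OF t(2), of ?N T] by (rule finite_subset[rotated]) (auto simp: Q_def)
  with \<open>infinite W'\<close> have "infinite (Q ` W')" by (rule infinite_image_finite_fibres)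
  moreover have "inj_on (\<lambda>T. zs_real d -` T) (Q ` W')"
  proof (rule inj_onI)
    fix T T' assume "T \<in> Q ` W'" "T' \<in> Q ` W'" "zs_real d -` T = zs_real d -` T'"
    moreover have "T \<subseteq> range (zs_real d)" "T' \<subseteq> range (zs_real d)"
      using \<open>T \<in> Q ` W'\<close> \<open>T' \<in> Q ` W'\<close> in_Zsqrt unfolding Zsqrt_def by blast+
    ultimately show "T = T'" by (metis image_vimage_eq Int_absorb2)
  qed
  ultimately have "infinite ((\<lambda>T. zs_real d -` T) ` Q ` W')"
    using finite_imageD by blast
  moreover have "(\<lambda>T. zs_real d -` T) ` Q ` W' \<subseteq> {S. D_quadruple d n S}"
    using quadruple by auto
  ultimately show ?thesis using finite_subset by blast
qed

section \<open>Units congruent to 1 modulo 12\<close>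

definition unit_1_mod_12 :: "int \<Rightarrow> real \<Rightarrow> bool" where
  "unit_1_mod_12 d e \<longleftrightarrow> e \<noteq> 0 \<and> (e - 1) / 12 \<in> Zsqrt d \<and> (inverse e - 1) / 12 \<in> Zsqrt d"

lemma one_mod_12_mult:
  assumes "d \<ge> 0" and "(e - 1) / 12 \<in> Zsqrt d" and "(f - 1) / 12 \<in> Zsqrt d"
  shows "(e * f - 1) / 12 \<in> Zsqrt d"
proof -
  define a b where "a = (e - 1) / 12" and "b = (f - 1) / 12"
  have "a \<in> Zsqrt d" "b \<in> Zsqrt d" using assms by (simp_all add: a_def b_def)
  then have "12 * a * b + a + b \<in> Zsqrt d" using assms(1) by simp
  moreover have "(e * f - 1) / 12 = 12 * a * b + a + b"
    unfolding a_def b_def by (simp add: field_simps)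
  ultimately show ?thesis by (simp only:)
qed

lemma unit_1_mod_12_power:
  assumes "d \<ge> 0" and "unit_1_mod_12 d e"
  shows "unit_1_mod_12 d (e ^ j)"
proof (induction j)
  case 0
  then show ?case by (simp add: unit_1_mod_12_def)
next
  case (Suc j)
  then show ?case
    using assms one_mod_12_mult[OF \<open>d \<ge> 0\<close>, of e "e ^ j"] one_mod_12_mult[OF \<open>d \<ge> 0\<close>, of "inverse e" "inverse (e ^ j)"]
    by (simp add: unit_1_mod_12_def power_inverse)
qed

lemma neg_pell_fourth_power_identity:
  fixes x y r :: "'a::comm_ring_1"
  assumes "x^2 - r^2 * y^2 = -1"
  shows "(x + y * r) ^ 4 - 1 = 4 * x * y * r * (x + y * r)^2"
proof -
  let ?h = "x^2 - r^2 * y^2 + 1"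
  have "(x + y * r) ^ 4 - 1 - 4 * x * y * r * (x + y * r)^2
      = ?h * (2 * x * (x + y * r) - 2 * y * r * (x + y * r) - ?h)"
    by (simp add: power2_eq_square power4_eq_xxxx algebra_simps)
  moreover have "?h = 0" using assms by simp
  ultimately show ?thesis by simp
qed

lemma neg_pell_fourth_power_1_mod_12:
  assumes "d \<ge> 0" and "x^2 - d * y^2 = -1" and "3 dvd x"
  shows "(zs_real d (x, y) ^ 4 - 1) / 12 \<in> Zsqrt d"
proof -
  let ?r = "sqrt (of_int d) :: real"
  let ?\<epsilon> = "zs_real d (x, y)"
  obtain x' where x': "x = 3 * x'" using assms(3) by (elim dvdE)
  have "(of_int x)^2 - ?r^2 * (of_int y)^2 = zs_real d (x, y) * zs_real d (x, - y)"
    unfolding zs_real_def by (simp add: algebra_simps power2_eq_square)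
  also have "\<dots> = -1"
    using zs_real_mult_conj[OF assms(1), of x y] assms(2) by simp
  finally have "(of_int x)^2 - ?r^2 * (of_int y)^2 = -1" .
  then have "?\<epsilon> ^ 4 - 1 = 4 * of_int x * of_int y * ?r * ?\<epsilon>^2"
    unfolding zs_real_def fst_conv snd_conv by (rule neg_pell_fourth_power_identity)
  then have "(?\<epsilon> ^ 4 - 1) / 12 = of_int x' * of_int y * ?r * ?\<epsilon>^2"
    by (simp add: x')
  then show ?thesis using assms(1) by simp
qed

lemma unit_1_mod_12_neg_pell_fourth_power:
  assumes "d \<ge> 0" and "x^2 - d * y^2 = -1" and "3 dvd x"
  shows "unit_1_mod_12 d (zs_real d (x, y) ^ 4)"
proof -
  have "zs_real d (x, y) * zs_real d (x, - y) = -1"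
    using zs_real_mult_conj[OF assms(1), of x y] assms(2) by simp
  then have "zs_real d (x, y) ^ 4 * zs_real d (x, - y) ^ 4 = 1"
    by (simp flip: power_mult_distrib)
  then have "inverse (zs_real d (x, y) ^ 4) = zs_real d (x, - y) ^ 4"
    by (rule inverse_unique)
  moreover have "zs_real d (x, y) \<noteq> 0"
    using \<open>zs_real d (x, y) * zs_real d (x, - y) = -1\<close> by auto
  ultimately show ?thesis
    using neg_pell_fourth_power_1_mod_12[OF assms] neg_pell_fourth_power_1_mod_12[of d x "- y"] assms
    by (simp add: unit_1_mod_12_def)
qed

lemma exists_unit_1_mod_12:
  assumes "d > 1" and "x^2 - d * y^2 = -1" and "3 dvd x"
  shows "\<exists>u. unit_1_mod_12 d u \<and> u > 1"
proof -
  let ?\<epsilon> = "zs_real d (\<bar>x\<bar>, \<bar>y\<bar>)"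
  have "\<bar>x\<bar>^2 - d * \<bar>y\<bar>^2 = -1" "3 dvd \<bar>x\<bar>" using assms(2,3) by simp_all
  then have "unit_1_mod_12 d (?\<epsilon> ^ 4)"
    using assms(1) by (intro unit_1_mod_12_neg_pell_fourth_power) simp_all
  moreover have "?\<epsilon> > 1"
  proof -
    have "y \<noteq> 0" using assms(2) by (auto simp: power2_eq_square) (smt (verit) zero_le_square)
    then have "of_int \<bar>y\<bar> * sqrt (of_int d) \<ge> (1 :: real) * sqrt (of_int d)"
      using assms(1) by (intro mult_right_mono) simp_all
    moreover have "sqrt (of_int d) > (1 :: real)" using assms(1) by simp
    moreover have "of_int \<bar>x\<bar> \<ge> (0 :: real)" by simp
    ultimately show ?thesis unfolding zs_real_def fst_conv snd_conv by linarith
  qed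
  then have "?\<epsilon> ^ 4 > 1" by simp
  ultimately show ?thesis by blast
qed

section \<open>Congruences for the norm equations\<close>

lemma norm_form_mod:
  fixes x y d p :: int
  shows "(x^2 - d * y^2) mod p = (x^2 mod p - (d mod p) * (y^2 mod p)) mod p"
proof -
  have "(x^2 - d * y^2) mod p = (x^2 - (d * y^2) mod p) mod p"
    by (simp only: mod_diff_right_eq)
  also have "(d * y^2) mod p = ((d mod p) * (y^2 mod p)) mod p"
    by (simp only: mod_mult_eq)
  also have "(x^2 - ((d mod p) * (y^2 mod p)) mod p) mod p = (x^2 mod p - (d mod p) * (y^2 mod p)) mod p"
    by (simp only: mod_diff_right_eq mod_diff_left_eq)
  finally show ?thesis .
qed

lemma square_mod_4: "(x::int)^2 mod 4 = (if even x then 0 else 1)"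
proof -
  have "x^2 mod 4 = (x mod 4)^2 mod 4" by (simp add: power_mod)
  moreover have "x mod 4 \<in> {0, 1, 2, 3}" by auto
  moreover have "even x \<longleftrightarrow> even (x mod 4)" by presburger
  ultimately show ?thesis by auto
qed

lemma square_mod_3: "(x::int)^2 mod 3 = (if 3 dvd x then 0 else 1)"
proof -
  have "x^2 mod 3 = (x mod 3)^2 mod 3" by (simp add: power_mod)
  moreover have "x mod 3 \<in> {0, 1, 2}" by auto
  moreover have "3 dvd x \<longleftrightarrow> x mod 3 = 0" by presburger
  ultimately show ?thesis by auto
qed

lemma norm_parities:
  fixes x y d :: int
  assumes "d mod 4 = 2"
  shows "x^2 - d * y^2 = -1 \<Longrightarrow> odd x \<and> odd y"
    and "x^2 - d * y^2 = 6 \<Longrightarrow> even x \<and> odd y"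
  using norm_form_mod[of x d y 4] assms by (auto simp: square_mod_4 split: if_splits)

lemma norms_mod_3:
  fixes x y x' y' d :: int
  assumes "x^2 - d * y^2 = -1" and "x'^2 - d * y'^2 = 6"
  shows "3 dvd x" and "\<not> 3 dvd x'" and "\<not> 3 dvd y'"
proof -
  have "\<not> (3 dvd x' \<and> 3 dvd y')"
  proof
    assume "3 dvd x' \<and> 3 dvd y'"
    then obtain a b where "x' = 3 * a" "y' = 3 * b" unfolding dvd_def by blast
    then have "9 * (a^2 - d * b^2) = 6" using assms(2) by (simp add: algebra_simps)
    then show False by presburger
  qed
  moreover have "d mod 3 \<in> {0, 1, 2}" by auto
  ultimately show "3 dvd x" and "\<not> 3 dvd x'" and "\<not> 3 dvd y'"
    using norm_form_mod[of x d y 3] norm_form_mod[of x' d y' 3] assms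
    by (auto simp: square_mod_3 split: if_splits)
qed

lemma three_dvd_square_minus_four:
  fixes w v i :: int
  assumes "2 * w = v + 3 * i" and "v mod 3 \<noteq> 2"
  shows "3 dvd w^2 - 4 * v"
proof -
  have "3 dvd v * (v - 1)"
  proof -
    have "3 dvd v \<or> 3 dvd v - 1" using assms(2) by presburger
    then show ?thesis by auto
  qed
  moreover have "4 * (w^2 - 4 * v) = v * (v - 1) + 3 * (2 * v * i + 3 * i^2 - 5 * v)"
  proof -
    have "4 * w^2 = (v + 3 * i)^2" using assms(1) by (metis power_mult_distrib power2_eq_square mult_2 numeral_Bit0)
    then show ?thesis by (simp add: power2_eq_square algebra_simps)
  qed
  ultimately have "3 dvd 4 * (w^2 - 4 * v)" by simp
  then show ?thesis by presburger
qed

text \<open>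
  Modulo 3, \<open>a + b\<surd>d \<mapsto> a + cb\<close> is a ring homomorphism (as \<open>c\<^sup>2 \<equiv> d\<close>) that kills
  \<open>ta + tb\<surd>d\<close> and sends \<open>(a + b\<surd>d)\<^sup>2 - 4(m + k\<surd>d) = Y\<^sub>1 + Y\<^sub>2\<surd>d\<close> to \<open>w\<^sup>2 - 4v \<equiv> v(v - 1)\<close>,
  which vanishes exactly when \<open>v \<noteq> 2\<close>. The two conclusions are the coordinates of
  \<open>(Y\<^sub>1 + Y\<^sub>2\<surd>d)(ta - tb\<surd>d)\<close>.
\<close>

lemma norm_6_divisibility:
  fixes a b c d k m ta tb Y\<^sub>1 Y\<^sub>2 :: int
  assumes "even d" and "even ta" and "even a"
    and "3 dvd ta + c * tb" and "3 dvd d - c^2" and "(m + c * k) mod 3 \<noteq> 2"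
    and ab: "2 * a = 3 + m - ta" "2 * b = k - tb"
    and Y: "Y\<^sub>1 = a^2 + d * b^2 - 4 * m" "Y\<^sub>2 = 2 * a * b - 4 * k"
  shows "6 dvd Y\<^sub>1 * ta - d * Y\<^sub>2 * tb" and "6 dvd Y\<^sub>2 * ta - Y\<^sub>1 * tb"
proof -
  define w v where "w = a + c * b" and "v = m + c * k"
  obtain i where i: "ta + c * tb = 3 * i" using assms(4) by blast
  have "k = 2 * b + tb" using ab(2) by simp
  then have "2 * w = (3 + m - ta) + c * (k - tb)" using ab(1) by (simp add: w_def algebra_simps)
  also have "\<dots> = v + 3 * (1 - i)" using i by (simp add: v_def algebra_simps)
  finally have "2 * w = v + 3 * (1 - i)" .
  moreover have "v mod 3 \<noteq> 2" using assms(6) by (simp add: v_def)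
  ultimately have "3 dvd w^2 - 4 * v" by (rule three_dvd_square_minus_four)
  moreover have "Y\<^sub>1 + c * Y\<^sub>2 = (w^2 - 4 * v) + (d - c^2) * b^2"
    by (simp add: Y w_def v_def power2_eq_square algebra_simps)
  moreover have "3 dvd (d - c^2) * b^2" using assms(5) by simp
  ultimately have Y3: "3 dvd Y\<^sub>1 + c * Y\<^sub>2" by simp
  have "even Y\<^sub>1" "even Y\<^sub>2" using assms(1,3) by (simp_all add: Y)
  have "3 dvd - c * tb * (Y\<^sub>1 + c * Y\<^sub>2) + Y\<^sub>1 * (ta + c * tb) - tb * Y\<^sub>2 * (d - c^2)"
    by (intro dvd_diff dvd_add dvd_mult[OF Y3] dvd_mult[OF assms(4)] dvd_mult[OF assms(5)])
  also have "- c * tb * (Y\<^sub>1 + c * Y\<^sub>2) + Y\<^sub>1 * (ta + c * tb) - tb * Y\<^sub>2 * (d - c^2) = Y\<^sub>1 * ta - d * Y\<^sub>2 * tb"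
    by (simp add: power2_eq_square algebra_simps)
  finally have "3 dvd Y\<^sub>1 * ta - d * Y\<^sub>2 * tb" .
  moreover have "even (Y\<^sub>1 * ta - d * Y\<^sub>2 * tb)" using \<open>even Y\<^sub>1\<close> \<open>even d\<close> by simp
  ultimately show "6 dvd Y\<^sub>1 * ta - d * Y\<^sub>2 * tb" by presburger
  have "3 dvd - tb * (Y\<^sub>1 + c * Y\<^sub>2) + Y\<^sub>2 * (ta + c * tb)"
    by (intro dvd_add dvd_mult[OF Y3] dvd_mult[OF assms(4)])
  also have "- tb * (Y\<^sub>1 + c * Y\<^sub>2) + Y\<^sub>2 * (ta + c * tb) = Y\<^sub>2 * ta - Y\<^sub>1 * tb"
    by (simp add: algebra_simps)
  finally have "3 dvd Y\<^sub>2 * ta - Y\<^sub>1 * tb" .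
  moreover have "even (Y\<^sub>2 * ta - Y\<^sub>1 * tb)" using \<open>even Y\<^sub>1\<close> \<open>even Y\<^sub>2\<close> by simp
  ultimately show "6 dvd Y\<^sub>2 * ta - Y\<^sub>1 * tb" by presburger
qed

lemma norm_6_sqrt_mod_3:
  fixes x' y' d :: int
  assumes "x'^2 - d * y'^2 = 6" and "\<not> 3 dvd y'"
  shows "3 dvd x' - x' * y' * y'" and "3 dvd d - (x' * y')^2"
proof -
  obtain r where r: "y'^2 = 1 + 3 * r"
    using assms(2) square_mod_3[of y'] by (metis div_mult_mod_eq add.commute mult.commute)
  have "x' - x' * y' * y' = 3 * (- r * x')" by (simp add: r power2_eq_square[symmetric] algebra_simps)
  then show "3 dvd x' - x' * y' * y'" by simp
  have "x'^2 = 6 + d * (1 + 3 * r)" using assms(1) r by simp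
  then have "d - (x' * y')^2 = 3 * (- 2 - 6 * r - 2 * d * r - 3 * d * r^2)"
    by (simp add: r algebra_simps power2_eq_square[of r])
  then show "3 dvd d - (x' * y')^2" by simp
qed

lemma product_norm_mod_4:
  fixes x y x' y' d :: int
  assumes "d mod 4 = 2" and "even x'" and "odd x" and "odd y" and "odd y'"
  shows "4 dvd (x' * x + d * y' * y) - x' - 2"
proof -
  obtain p where "x' = 2 * p" using \<open>even x'\<close> by (rule evenE)
  moreover obtain q where "x = 2 * q + 1" using \<open>odd x\<close> by (rule oddE)
  moreover have "odd (y' * y)" using \<open>odd y'\<close> \<open>odd y\<close> by simp
  then obtain f where "y' * y = 2 * f + 1" by (rule oddE)
  moreover obtain e where "d = 4 * e + 2"
  proof -
    have "\<exists>e. d = 4 * e + 2" using assms(1) by presburger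
    then show ?thesis using that by blast
  qed
  moreover have "(x' * x + d * y' * y) - x' - 2 = x' * (x - 1) + (d * (y' * y) - 2)"
    by (simp add: algebra_simps)
  ultimately have "(x' * x + d * y' * y) - x' - 2 = 4 * (p * q + 2 * e * f + e + f)"
    by (simp only:) (simp add: algebra_simps)
  then show ?thesis by simp
qed

lemma admissible_of_unit_1_mod_12:
  fixes \<alpha> \<beta> t s R\<^sub>0 A\<^sub>0 e :: real
  defines "R \<equiv> (\<alpha> * e + \<beta> / e - t) / 2"
  assumes "d \<ge> 0" and "unit_1_mod_12 d e"
    and in_Zsqrt: "\<alpha> \<in> Zsqrt d" "\<beta> \<in> Zsqrt d" "t \<in> Zsqrt d" "s \<in> Zsqrt d" "R\<^sub>0 \<in> Zsqrt d" "A\<^sub>0 \<in> Zsqrt d"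
    and "t * s = 6" and R\<^sub>0: "2 * R\<^sub>0 + t = \<alpha> + \<beta>"
    and A\<^sub>0: "t * A\<^sub>0 = R\<^sub>0^2 - zs_real d n" and \<alpha>\<beta>: "4 * (\<alpha> * \<beta>) = 3 * zs_real d n"
  shows "R \<in> Zsqrt d" and "(R^2 - zs_real d n) / t \<in> Zsqrt d"
    and "\<exists>Z \<in> Zsqrt d. (2 * R + t)^2 - Z^2 = 3 * zs_real d n"
proof -
  have "e \<noteq> 0" and a: "(e - 1) / 12 \<in> Zsqrt d" and a': "(inverse e - 1) / 12 \<in> Zsqrt d"
    using assms(3) by (simp_all add: unit_1_mod_12_def)
  define D where "D = \<alpha> * ((e - 1) / 12) + \<beta> * ((inverse e - 1) / 12)"
  have "D \<in> Zsqrt d"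
    unfolding D_def by (intro Zsqrt_add Zsqrt_mult \<open>d \<ge> 0\<close> a a' in_Zsqrt)
  have \<beta>: "\<beta> = 2 * R\<^sub>0 + t - \<alpha>" using R\<^sub>0 by simp
  have R_eq: "R = R\<^sub>0 + 6 * D"
    unfolding R_def D_def \<beta> using \<open>e \<noteq> 0\<close> by (simp add: field_simps)
  then show "R \<in> Zsqrt d" using \<open>D \<in> Zsqrt d\<close> in_Zsqrt \<open>d \<ge> 0\<close> by simp
  have "R^2 - zs_real d n = t * A\<^sub>0 + (t * s) * (2 * R\<^sub>0 * D + 6 * D^2)"
    unfolding R_eq A\<^sub>0 \<open>t * s = 6\<close> by (simp add: power2_eq_square algebra_simps)
  moreover have "t \<noteq> 0" using \<open>t * s = 6\<close> by auto
  ultimately have "(R^2 - zs_real d n) / t = A\<^sub>0 + s * (2 * R\<^sub>0 * D + 6 * D^2)"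
    by (simp add: field_simps)
  then show "(R^2 - zs_real d n) / t \<in> Zsqrt d"
    using \<open>D \<in> Zsqrt d\<close> in_Zsqrt \<open>d \<ge> 0\<close> by simp
  have "\<beta> * inverse e - \<alpha> * e = \<beta> * (1 + 12 * ((inverse e - 1) / 12)) - \<alpha> * (1 + 12 * ((e - 1) / 12))"
    by (simp add: field_simps)
  also have "\<dots> \<in> Zsqrt d"
    by (intro Zsqrt_diff Zsqrt_add Zsqrt_mult \<open>d \<ge> 0\<close> a a' in_Zsqrt one_in_Zsqrt numeral_in_Zsqrt)
  finally have "\<beta> * inverse e - \<alpha> * e \<in> Zsqrt d" .
  moreover have "(2 * R + t)^2 - (\<beta> * inverse e - \<alpha> * e)^2 = 4 * (\<alpha> * \<beta>) * (e * inverse e)"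
    using \<open>e \<noteq> 0\<close> by (simp add: R_def field_simps power2_eq_square)
  ultimately show "\<exists>Z \<in> Zsqrt d. (2 * R + t)^2 - Z^2 = 3 * zs_real d n"
    using \<open>e \<noteq> 0\<close> \<alpha>\<beta> by auto
qed

context
  fixes d :: int and u :: real
  assumes d: "d > 0" "d mod 4 = 2"
    and u: "unit_1_mod_12 d u" "u > 1"
begin

lemma infinite_D_quadruples_of_factorization:
  assumes in_Zsqrt: "\<alpha> \<in> Zsqrt d" "\<beta> \<in> Zsqrt d" "t \<in> Zsqrt d" "s \<in> Zsqrt d" "R\<^sub>0 \<in> Zsqrt d" "A\<^sub>0 \<in> Zsqrt d"
    and "\<alpha> \<noteq> 0" and "t * s = 6" and "2 * R\<^sub>0 + t = \<alpha> + \<beta>"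
    and "t * A\<^sub>0 = R\<^sub>0^2 - zs_real d n" and "4 * (\<alpha> * \<beta>) = 3 * zs_real d n"
  shows "infinite {S. D_quadruple d n S}"
proof -
  have "d \<ge> 0" "t \<noteq> 0" using d \<open>t * s = 6\<close> by auto
  define E where "E = range (\<lambda>j. u ^ j)"
  define R where "R e = (\<alpha> * e + \<beta> / e - t) / 2" for e
  have "inj (\<lambda>j. u ^ j)" using u(2) by (auto intro: injI)
  then have "infinite E" by (simp add: E_def range_inj_infinite)
  moreover have "finite {e \<in> E. R e = v}" for v
  proof -
    have "{e \<in> E. R e = v} \<subseteq> {e. (\<alpha> / 2) * e^2 + (- t / 2 - v) * e + \<beta> / 2 = 0}"
      using u(2) by (auto simp: E_def R_def field_simps power2_eq_square)
    moreover have "finite \<dots>" using \<open>\<alpha> \<noteq> 0\<close> by (intro finite_quadratic_roots) simp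
    ultimately show ?thesis by (rule finite_subset)
  qed
  ultimately have "infinite (R ` E)" by (rule infinite_image_finite_fibres)
  then show ?thesis
  proof (rule infinite_D_quadruples[OF inj_zs_real[OF d(2,1)] \<open>d \<ge> 0\<close> in_Zsqrt(3) \<open>t \<noteq> 0\<close>])
    fix r assume "r \<in> R ` E"
    then obtain j where "r = R (u ^ j)" by (auto simp: E_def)
    moreover have "unit_1_mod_12 d (u ^ j)" using unit_1_mod_12_power[OF \<open>d \<ge> 0\<close> u(1)] .
    ultimately show "r \<in> Zsqrt d \<and> (r^2 - zs_real d n) / t \<in> Zsqrt d
        \<and> (\<exists>Z \<in> Zsqrt d. (2 * r + t)^2 - Z^2 = 3 * zs_real d n)"
      using admissible_of_unit_1_mod_12[OF \<open>d \<ge> 0\<close> _ assms(1-6,8-11)] unfolding R_def by blast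
  qed
qed

lemma infinite_D_quadruples_even_even:
  assumes "even m" and "even k"
  shows "infinite {S. D_quadruple d (4 * m, 4 * k) S}"
proof -
  let ?\<nu> = "zs_real d (m, k)"
  have "zs_real d (3 * m, 3 * k) / of_int 2 \<in> Zsqrt d"
    using assms by (intro zs_real_divide_in_Zsqrt) simp_all
  moreover have "zs_real d (3 * m, 3 * k) / of_int 2 = 3 * ?\<nu> / 2"
    by (simp add: zs_real_def algebra_simps)
  ultimately have R\<^sub>0: "3 * ?\<nu> / 2 \<in> Zsqrt d" by simp
  show ?thesis
    by (rule infinite_D_quadruples_of_factorization[where \<alpha> = 1 and \<beta> = "3 * ?\<nu>" and t = 1
          and s = 6 and R\<^sub>0 = "3 * ?\<nu> / 2" and A\<^sub>0 = "(3 * ?\<nu> / 2)^2 - 4 * ?\<nu>"])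
      (use R\<^sub>0 d in \<open>simp_all add: zs_real_def algebra_simps\<close>)
qed

lemma infinite_D_quadruples_even_odd:
  assumes "x^2 - d * y^2 = -1" and "even m" and "odd k"
  shows "infinite {S. D_quadruple d (4 * m, 4 * k) S}"
proof -
  let ?\<nu> = "zs_real d (m, k)" and ?\<epsilon> = "zs_real d (x, y)" and ?\<epsilon>' = "zs_real d (x, - y)"
  define R\<^sub>0 where "R\<^sub>0 = zs_real d (1 + 3 * m - x, 3 * k - y) / of_int 2"
  have "odd x" "odd y" using norm_parities(1)[OF d(2) assms(1)] by simp_all
  have conj: "?\<epsilon> * ?\<epsilon>' = -1" using zs_real_mult_conj[of d x y] assms(1) d by simp
  have n: "zs_real d (4 * m, 4 * k) = 4 * ?\<nu>" by (simp add: zs_real_def algebra_simps)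
  show ?thesis
  proof (rule infinite_D_quadruples_of_factorization[where \<alpha> = 1 and \<beta> = "3 * ?\<nu>" and t = ?\<epsilon>
        and s = "- 6 * ?\<epsilon>'" and R\<^sub>0 = R\<^sub>0 and A\<^sub>0 = "- ?\<epsilon>' * (R\<^sub>0^2 - 4 * ?\<nu>)"])
    show "R\<^sub>0 \<in> Zsqrt d"
      unfolding R\<^sub>0_def using assms \<open>odd x\<close> \<open>odd y\<close> by (intro zs_real_divide_in_Zsqrt) simp_all
    then show "- ?\<epsilon>' * (R\<^sub>0^2 - 4 * ?\<nu>) \<in> Zsqrt d" using d by simp
    have "?\<epsilon> * (- 6 * ?\<epsilon>') = - 6 * (?\<epsilon> * ?\<epsilon>')" by (simp add: ac_simps)
    also have "\<dots> = 6" by (simp add: conj)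
    finally show "?\<epsilon> * (- 6 * ?\<epsilon>') = 6" .
    have "?\<epsilon> * (- ?\<epsilon>' * (R\<^sub>0^2 - 4 * ?\<nu>)) = - (?\<epsilon> * ?\<epsilon>') * (R\<^sub>0^2 - 4 * ?\<nu>)" by (simp add: ac_simps)
    also have "\<dots> = R\<^sub>0^2 - zs_real d (4 * m, 4 * k)" by (simp add: conj n)
    finally show "?\<epsilon> * (- ?\<epsilon>' * (R\<^sub>0^2 - 4 * ?\<nu>)) = R\<^sub>0^2 - zs_real d (4 * m, 4 * k)" .
    show "2 * R\<^sub>0 + ?\<epsilon> = 1 + 3 * ?\<nu>" "4 * (1 * (3 * ?\<nu>)) = 3 * zs_real d (4 * m, 4 * k)"
      by (simp_all add: R\<^sub>0_def zs_real_def field_simps)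
  qed (use d in simp_all)
qed

lemma infinite_D_quadruples_3_mod_4_even:
  assumes "m mod 4 = 3" and "even k"
  shows "infinite {S. D_quadruple d (4 * m, 4 * k) S}"
proof -
  let ?\<nu> = "zs_real d (m, k)"
  define a b where "a = (3 * m - 1) div 2" and "b = 3 * k div 2"
  have ab: "3 * m - 1 = 2 * a" "3 * k = 2 * b"
    unfolding a_def b_def using assms by presburger+
  have "even a" using assms(1) ab(1) by presburger
  have "even d" using d(2) by presburger
  have n: "zs_real d (4 * m, 4 * k) = 4 * ?\<nu>" by (simp add: zs_real_def algebra_simps)
  show ?thesis
  proof (rule infinite_D_quadruples_of_factorization[where \<alpha> = 1 and \<beta> = "3 * ?\<nu>" and t = 2
        and s = 3 and R\<^sub>0 = "zs_real d (a, b)" and A\<^sub>0 = "(zs_real d (a, b)^2 - 4 * ?\<nu>) / 2"])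
    show "(zs_real d (a, b)^2 - 4 * ?\<nu>) / 2 \<in> Zsqrt d"
      using d \<open>even a\<close> \<open>even d\<close> by (intro half_square_diff_in_Zsqrt) simp_all
    have "(2 * a + 1, 2 * b) = (3 * m, 3 * k)" using ab by simp
    have "2 * zs_real d (a, b) + 2 = zs_real d (2 * a + 1, 2 * b) + 1"
      by (simp add: zs_real_def algebra_simps)
    also have "\<dots> = zs_real d (3 * m, 3 * k) + 1"
      by (simp only: \<open>(2 * a + 1, 2 * b) = _\<close>)
    finally show "2 * zs_real d (a, b) + 2 = 1 + 3 * ?\<nu>"
      by (simp add: zs_real_def algebra_simps)
  qed (use d n in simp_all)
qed

lemma infinite_D_quadruples_1_mod_4_even:
  assumes "x^2 - d * y^2 = -1" and "m mod 4 = 1" and "even k"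
  shows "infinite {S. D_quadruple d (4 * m, 4 * k) S}"
proof -
  let ?\<nu> = "zs_real d (m, k)" and ?\<epsilon> = "zs_real d (x, y)" and ?\<epsilon>' = "zs_real d (x, - y)"
  have "odd x" "odd y" using norm_parities(1)[OF d(2) assms(1)] by simp_all
  obtain i j e f where ijef: "m = 4 * i + 1" "k = 2 * j" "d = 4 * e + 2" "x = 2 * f + 1"
  proof -
    have "\<exists>i. m = 4 * i + 1" "\<exists>j. k = 2 * j" "\<exists>e. d = 4 * e + 2" "\<exists>f. x = 2 * f + 1"
      using assms(2,3) d(2) \<open>odd x\<close> by presburger+
    then show ?thesis using that by blast
  qed
  define a where "a = 2 * (3 * (2 * e + 1) * j * y - (6 * f * i + f + 3 * i + 1))"
  define b where "b = y * (6 * i + 2) - 3 * j * x"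
  have ab: "2 * a = x - 3 * m * x + 3 * d * k * y - 2" "2 * b = y - 3 * k * x + 3 * m * y"
    unfolding a_def b_def ijef by (simp_all add: algebra_simps)
  have "even a" "even d" using d(2) by (simp_all add: a_def, presburger)
  have conj: "?\<epsilon> * ?\<epsilon>' = -1" using zs_real_mult_conj[of d x y] assms(1) d by simp
  have n: "zs_real d (4 * m, 4 * k) = 4 * ?\<nu>" by (simp add: zs_real_def algebra_simps)
  show ?thesis
  proof (rule infinite_D_quadruples_of_factorization[where \<alpha> = ?\<epsilon> and \<beta> = "- 3 * ?\<nu> * ?\<epsilon>'" and t = 2
        and s = 3 and R\<^sub>0 = "zs_real d (a, b)" and A\<^sub>0 = "(zs_real d (a, b)^2 - 4 * ?\<nu>) / 2"])
    show "(zs_real d (a, b)^2 - 4 * ?\<nu>) / 2 \<in> Zsqrt d"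
      using d \<open>even a\<close> \<open>even d\<close> by (intro half_square_diff_in_Zsqrt) simp_all
    show "?\<epsilon> \<noteq> 0" using conj by auto
    have "(2 * a + 2, 2 * b) = (x - 3 * (m * x - d * k * y), y - 3 * (k * x - m * y))"
      using ab by (simp add: algebra_simps)
    have "2 * zs_real d (a, b) + 2 = zs_real d (2 * a + 2, 2 * b)"
      by (simp add: zs_real_def algebra_simps)
    also have "\<dots> = zs_real d (x - 3 * (m * x - d * k * y), y - 3 * (k * x - m * y))"
      by (simp only: \<open>(2 * a + 2, 2 * b) = _\<close>)
    also have "\<dots> = ?\<epsilon> + - 3 * ?\<nu> * ?\<epsilon>'"
      using d by (simp add: zs_real_def algebra_simps)
    finally show "2 * zs_real d (a, b) + 2 = ?\<epsilon> + - 3 * ?\<nu> * ?\<epsilon>'" .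
    have "4 * (?\<epsilon> * (- 3 * ?\<nu> * ?\<epsilon>')) = - 12 * ?\<nu> * (?\<epsilon> * ?\<epsilon>')" by (simp add: ac_simps)
    then show "4 * (?\<epsilon> * (- 3 * ?\<nu> * ?\<epsilon>')) = 3 * zs_real d (4 * m, 4 * k)"
      by (simp add: conj n)
  qed (use d n in simp_all)
qed

lemma infinite_D_quadruples_odd_odd_of_norm_6:
  assumes t: "ta^2 - d * tb^2 = 6 * \<sigma>" "\<sigma> = 1 \<or> \<sigma> = -1" "even ta" "odd tb"
    and c: "3 dvd ta + c * tb" "3 dvd d - c^2" "(m + c * k) mod 3 \<noteq> 2"
    and "4 dvd m - ta - 1" and "odd m" and "odd k"
  shows "infinite {S. D_quadruple d (4 * m, 4 * k) S}"
proof -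
  let ?\<nu> = "zs_real d (m, k)" and ?t = "zs_real d (ta, tb)" and ?t' = "zs_real d (ta, - tb)"
  define a b where "a = (3 + m - ta) div 2" and "b = (k - tb) div 2"
  have ab: "2 * a = 3 + m - ta" "2 * b = k - tb"
    unfolding a_def b_def using t(3,4) \<open>odd m\<close> \<open>odd k\<close> by presburger+
  have "even a" using ab(1) \<open>4 dvd m - ta - 1\<close> by presburger
  have "even d" using d(2) by presburger
  define Y\<^sub>1 Y\<^sub>2 where "Y\<^sub>1 = a^2 + d * b^2 - 4 * m" and "Y\<^sub>2 = 2 * a * b - 4 * k"
  define P Q where "P = Y\<^sub>1 * ta - d * Y\<^sub>2 * tb" and "Q = Y\<^sub>2 * ta - Y\<^sub>1 * tb"
  have "6 dvd P" "6 dvd Q"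
    using norm_6_divisibility[OF \<open>even d\<close> t(3) \<open>even a\<close> c ab Y\<^sub>1_def Y\<^sub>2_def] by (simp_all add: P_def Q_def)
  have n: "zs_real d (4 * m, 4 * k) = 4 * ?\<nu>" by (simp add: zs_real_def algebra_simps)
  have norm: "?t * ?t' = 6 * \<sigma>" using zs_real_mult_conj[of d ta tb] t(1) d by simp
  have \<sigma>: "of_int \<sigma> * of_int \<sigma> = (1 :: real)" using t(2) by auto
  have square: "zs_real d (a, b)^2 - 4 * ?\<nu> = zs_real d (Y\<^sub>1, Y\<^sub>2)"
    using d by (simp add: zs_real_square Y\<^sub>1_def Y\<^sub>2_def) (simp add: zs_real_def algebra_simps)
  have PQ: "zs_real d (P, Q) = zs_real d (Y\<^sub>1, Y\<^sub>2) * ?t'"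
    using d by (simp add: zs_real_def P_def Q_def algebra_simps)
  show ?thesis
  proof (rule infinite_D_quadruples_of_factorization[where \<alpha> = 3 and \<beta> = ?\<nu> and t = ?t
        and s = "\<sigma> * ?t'" and R\<^sub>0 = "zs_real d (a, b)" and A\<^sub>0 = "zs_real d (\<sigma> * P, \<sigma> * Q) / of_int 6"])
    show "zs_real d (\<sigma> * P, \<sigma> * Q) / of_int 6 \<in> Zsqrt d"
      using \<open>6 dvd P\<close> \<open>6 dvd Q\<close> by (intro zs_real_divide_in_Zsqrt) simp_all
    have "?t * (\<sigma> * ?t') = (\<sigma> * \<sigma>) * 6" using norm by (simp add: ac_simps)
    then show "?t * (\<sigma> * ?t') = 6" using \<sigma> by simp
    have "zs_real d (\<sigma> * P, \<sigma> * Q) = \<sigma> * zs_real d (P, Q)" by (simp add: zs_real_def algebra_simps)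
    then have "?t * (zs_real d (\<sigma> * P, \<sigma> * Q) / of_int 6) = \<sigma> * (?t * ?t') * zs_real d (Y\<^sub>1, Y\<^sub>2) / 6"
      by (simp add: PQ ac_simps)
    also have "\<dots> = zs_real d (a, b)^2 - zs_real d (4 * m, 4 * k)"
      using \<sigma> by (simp add: norm square n)
    finally show "?t * (zs_real d (\<sigma> * P, \<sigma> * Q) / of_int 6) = zs_real d (a, b)^2 - zs_real d (4 * m, 4 * k)" .
    have "(2 * a + ta, 2 * b + tb) = (3 + m, k)" using ab by simp
    have "2 * zs_real d (a, b) + ?t = zs_real d (2 * a + ta, 2 * b + tb)"
      by (simp add: zs_real_def algebra_simps)
    also have "\<dots> = zs_real d (3 + m, k)"
      by (simp only: \<open>(2 * a + ta, 2 * b + tb) = _\<close>)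
    finally show "2 * zs_real d (a, b) + ?t = 3 + ?\<nu>"
      by (simp add: zs_real_def algebra_simps)
  qed (use d n in simp_all)
qed

lemma infinite_D_quadruples_odd_odd_of_solutions:
  assumes "x^2 - d * y^2 = -1" and "x'^2 - d * y'^2 = 6"
    and "(m - x' * y' * k) mod 3 \<noteq> 2" and "odd m" and "odd k"
  shows "infinite {S. D_quadruple d (4 * m, 4 * k) S}"
proof -
  define c where "c = - x' * y'"
  have "odd x" "odd y" "even x'" "odd y'"
    using norm_parities[OF d(2)] assms(1,2) by simp_all
  have "even d" using d(2) by presburger
  have c1: "3 dvd x' + c * y'" and c2: "3 dvd d - c^2"
    using norm_6_sqrt_mod_3[OF assms(2)] norms_mod_3[OF assms(1,2)] by (simp_all add: c_def)
  have v: "(m + c * k) mod 3 \<noteq> 2" using assms(3) by (simp add: c_def)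
  show ?thesis
  proof (cases "4 dvd m - x' - 1")
    case True
    show ?thesis
      by (rule infinite_D_quadruples_odd_odd_of_norm_6[where \<sigma> = 1 and c = c])
        (use assms \<open>even x'\<close> \<open>odd y'\<close> c1 c2 v True in simp_all)
  next
    case False
    \<comment> \<open>multiplying by the unit \<open>x + y\<surd>d\<close> of norm \<open>-1\<close> shifts \<open>ta\<close> by 2 modulo 4\<close>
    define ta tb where "ta = x' * x + d * y' * y" and "tb = x' * y + y' * x"
    have "ta^2 - d * tb^2 = (x'^2 - d * y'^2) * (x^2 - d * y^2)"
      by (simp add: ta_def tb_def power2_eq_square algebra_simps)
    then have norm: "ta^2 - d * tb^2 = 6 * (-1)" using assms(1,2) by simp
    have "even ta" "odd tb"
      using \<open>even x'\<close> \<open>even d\<close> \<open>odd x\<close> \<open>odd y'\<close> by (simp_all add: ta_def tb_def)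
    have "ta + c * tb = (x' + c * y') * (x + c * y) + (d - c^2) * (y' * y)"
      by (simp add: ta_def tb_def power2_eq_square algebra_simps)
    then have c1': "3 dvd ta + c * tb" using c1 c2 by simp
    have "4 dvd ta - x' - 2"
      unfolding ta_def using d(2) \<open>even x'\<close> \<open>odd x\<close> \<open>odd y\<close> \<open>odd y'\<close> by (rule product_norm_mod_4)
    then have "4 dvd m - ta - 1" using False \<open>odd m\<close> \<open>even x'\<close> by presburger
    from infinite_D_quadruples_odd_odd_of_norm_6[OF norm _ \<open>even ta\<close> \<open>odd tb\<close> c1' c2 v this assms(4,5)]
    show ?thesis by simp
  qed
qed

lemma infinite_D_quadruples_odd_odd:
  assumes "x^2 - d * y^2 = -1" and "x'^2 - d * y'^2 = 6"
    and "\<not> (m mod 6 = 5 \<and> k mod 6 = 3)" and "odd m" and "odd k"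
  shows "infinite {S. D_quadruple d (4 * m, 4 * k) S}"
proof (cases "(m - x' * y' * k) mod 3 = 2")
  case False
  then show ?thesis
    using infinite_D_quadruples_odd_odd_of_solutions[OF assms(1,2) _ assms(4,5)] by blast
next
  case True
  have "\<not> 3 dvd x' * y'" using norms_mod_3[OF assms(1,2)] by (simp add: prime_dvd_mult_iff)
  have "(m - x' * (- y') * k) mod 3 \<noteq> 2"
  proof
    assume "(m - x' * (- y') * k) mod 3 = 2"
    with True have "3 dvd (x' * y') * k" "m mod 3 = 2" by (simp_all, presburger+)
    with \<open>\<not> 3 dvd x' * y'\<close> have "3 dvd k" by (simp add: prime_dvd_mult_iff)
    with \<open>m mod 3 = 2\<close> assms(3-5) show False by presburger
  qed
  moreover have "x'^2 - d * (- y')^2 = 6" using assms(2) by simp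
  ultimately show ?thesis
    using infinite_D_quadruples_odd_odd_of_solutions[OF assms(1) _ _ assms(4,5)] by blast
qed

end

theorem theorem1p2:
  fixes d m k :: int
  assumes "d > 0" and "squarefree d" and "d mod 4 = 2"
    and "\<exists>x y :: int. x^2 - d * y^2 = -1"
    and "\<exists>x y :: int. x^2 - d * y^2 = 6"
    and "\<not> (m mod 6 = 5 \<and> k mod 6 = 3)"
  shows "infinite {S. D_quadruple d (4 * m, 4 * k) S}"
proof -
  obtain x y x' y' :: int where pell: "x^2 - d * y^2 = -1" and norm_6: "x'^2 - d * y'^2 = 6"
    using assms(4,5) by blast
  have "d > 1" using assms(1,3) by presburger
  then obtain u where u: "unit_1_mod_12 d u" "u > 1"
    using exists_unit_1_mod_12 pell norms_mod_3(1)[OF pell norm_6] by blast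
  have "(even m \<and> even k) \<or> (even m \<and> odd k) \<or> (m mod 4 = 3 \<and> even k) \<or> (m mod 4 = 1 \<and> even k)
    \<or> (odd m \<and> odd k)" by presburger
  then show ?thesis
  proof (elim disjE conjE)
    show "even m \<Longrightarrow> even k \<Longrightarrow> ?thesis"
      by (rule infinite_D_quadruples_even_even[OF assms(1,3) u])
    show "even m \<Longrightarrow> odd k \<Longrightarrow> ?thesis"
      by (rule infinite_D_quadruples_even_odd[OF assms(1,3) u pell])
    show "m mod 4 = 3 \<Longrightarrow> even k \<Longrightarrow> ?thesis"
      by (rule infinite_D_quadruples_3_mod_4_even[OF assms(1,3) u])
    show "m mod 4 = 1 \<Longrightarrow> even k \<Longrightarrow> ?thesis"
      by (rule infinite_D_quadruples_1_mod_4_even[OF assms(1,3) u pell])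
    show "odd m \<Longrightarrow> odd k \<Longrightarrow> ?thesis"
      by (rule infinite_D_quadruples_odd_odd[OF assms(1,3) u pell norm_6 assms(6)])
  qed
qed

end
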